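(* Let $\Omega$ be strictly convex, and consider a family of meshes with $\mathbb h\to0$ (with stencil sizes satisfying (K1)–(K3)) and the corresponding discrete solutions $u_h$. Define for $x\in\overline\Omega$ the envelopes $\overline u(x)=\limsup_{y\to x,\ \mathbb h\to0}u_h(y)$ and $\underline u(x)=\liminf_{y\to x,\ \mathbb h\to0}u_h(y)$ (with $y\in\overline\Omega$). Then $\overline u(x)=\underline u(x)=g(x)$ for all $x\in\partial\Omega$.
   Context: Standing setting: $d\ge2$, $\Omega\subset\mathbb R^d$ a bounded open strictly convex domain, $f:\Omega\to[0,\infty)$ bounded and continuous, $g:\partial\Omega\to\mathbb R$ bounded and continuous. $\mathbb S$: real symmetric $d\times d$ matrices; $\mathbb S_+$: positive semidefinite ones; $\mathbb S_1=\{B\in\mathbb S_+:\operatorname{tr}B=1\}$. Mesh: $\mathcal T_h$ is a shape-regular simplicial partition whose union $\Omega_h$ satisfies $\Omega_h\subset\Omega$; its nodes are $\mathcal N_h=\mathcal N_h^I\cup\mathcal N_h^B$, where the boundary nodes $\mathcal N_h^B$ (nodes on $\partial\Omega_h$) lie on $\partial\Omega$ and $\mathcal N_h^I$ are the interior nodes. The mesh function $h$ is the upper semicontinuous function with $h(x)=\operatorname{diam}T$ for $x$ in the interior of $T\in\mathcal T_h$ (on element boundaries, the largest diameter of the adjacent elements), and $\mathbb h=\|h\|_{L^\infty}$ is the maximal element diameter. $V_h$ is the space of continuous piecewise linear functions on $\mathcal T_h$; functions on $\Omega_h$ (in particular elements of $V_h$) are extended to $\overline\Omega$ by being constant along the outer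 normal directions of $\partial\Omega_h$. $B(\overline\Omega)$ denotes the bounded real functions on $\overline\Omega$. Controls: $\mathbf F\subset\mathbb R^{d\times d}\times\{\text{diagonal }d\times d\text{ matrices}\}$ is compact, the map $(\sigma,\lambda)\mapsto\sigma\lambda\sigma^T$ is a bijection from $\mathbf F$ onto $\mathbb S_1$, and every $\lambda$ occurring in $\mathbf F$ has nonnegative diagonal entries and the same trace $C>0$. For $B\in\mathbb S_1$, $(\sigma(B),\lambda(B))$ denotes its preimage; $\sigma_j$ is the $j$th column of $\sigma$ and $\lambda_j$ the $j$th diagonal entry of $\lambda$. Stencil size: $k=k(h,x)>0$ is such that $x\pm k(h,x)\sigma_j\in\overline\Omega_h$ for every $x\in\Omega_h$ and every column $\sigma_j$ of every $\sigma$ with $(\sigma,\lambda)\in\mathbf F$. With $\Omega_i=\{x\in\Omega:\operatorname{dist}(x,\partial\Omega)>1/i\}$: (K1) for each $i\in\mathbb N$, $\sup_{x\in\Omega_i}h(x)/k(h,x)\to0$ as $\mathbb h\to0$; (K2) for each $i$ there is $h'>0$ such that $x\mapsto k(h,x)$ is constant on $\Omega_i$ whenever $\mathbb h<h'$; (K3) $\sup_{x\in\Omega}k(h,x)\to0$ as $\mathbb h\to0$. Scheme: for $B\in\mathbb S_1$, $s\in\mathbb R$, $\phi\in B(\overline\Omega)$, with $(\sigma,\lambda)=(\sigma(B),\lambda(B))$ and $k=k(h,x_i)$, set $L_h^B(s,\phi)(x_i)=-\sum_{j=1}^d\lambda_j\frac{\phi(x_i-k\sigma_j)-2s+\phi(x_i+k\sigma_j)}{k^2}+f(x_i)\sqrt[d]{\det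 B}$ for $x_i\in\mathcal N_h^I$, and $L_h^B(s,\phi)(x_i)=s-g(x_i)$ for $x_i\in\mathcal N_h^B$; $H_h(s,\phi)(x_i)=\sup_{B\in\mathbb S_1}L_h^B(s,\phi)(x_i)$. The discrete solution $u_h\in V_h$ is the (unique) function with $H_h(u_h(x_i),u_h)(x_i)=0$ for all $x_i\in\mathcal N_h$. *)

theory Defs
  imports "HOL-Analysis.Analysis" "HOL-Library.Liminf_Limsup"
begin

definition strictly_convex_domain :: "(real^'n) set \<Rightarrow> bool" where
  "strictly_convex_domain \<Omega> \<longleftrightarrow> \<Omega> \<noteq> {} \<and> open \<Omega> \<and> bounded \<Omega> \<and>
     (\<forall>x\<in>closure \<Omega>. \<forall>y\<in>closure \<Omega>. x \<noteq> y \<longrightarrow>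
        (\<forall>t::real. 0 < t \<and> t < 1 \<longrightarrow> (1 - t) *\<^sub>R x + t *\<^sub>R y \<in> \<Omega>))"

definition inner_layer :: "(real^'n) set \<Rightarrow> nat \<Rightarrow> (real^'n) set" where
  "inner_layer \<Omega> i = {x \<in> \<Omega>. infdist x (frontier \<Omega>) > 1 / real i}"

text \<open>A mesh is represented by the set of vertex sets of its simplices.\<close>
definition simplex_verts :: "(real^'n) set \<Rightarrow> bool" where
  "simplex_verts V \<longleftrightarrow> finite V \<and> card V = CARD('n) + 1 \<and> \<not> affine_dependent V"

definition simplicial_partition :: "(real^'n) set set \<Rightarrow> bool" where
  "simplicial_partition \<T> \<longleftrightarrow> finite \<T> \<and> (\<forall>V\<in>\<T>. simplex_verts V) \<and>
     (\<forall>V\<in>\<T>. \<forall>W\<in>\<T>. convex hull V \<inter> convex hull W = convex hull (V \<inter> W))"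

definition mesh_domain :: "(real^'n) set set \<Rightarrow> (real^'n) set" where
  "mesh_domain \<T> = (\<Union>V\<in>\<T>. convex hull V)"

definition nodes :: "(real^'n) set set \<Rightarrow> (real^'n) set" where
  "nodes \<T> = \<Union>\<T>"

definition bnodes :: "(real^'n) set set \<Rightarrow> (real^'n) set" where
  "bnodes \<T> = nodes \<T> \<inter> frontier (mesh_domain \<T>)"

definition inodes :: "(real^'n) set set \<Rightarrow> (real^'n) set" where
  "inodes \<T> = nodes \<T> - frontier (mesh_domain \<T>)"

definition mesh_fun :: "(real^'n) set set \<Rightarrow> real^'n \<Rightarrow> real" where
  "mesh_fun \<T> x = Max (insert 0 {diameter (convex hull V) | V. V \<in> \<T> \<and> x \<in> convex hull V})"

definition mesh_size :: "(real^'n) set set \<Rightarrow> real" where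
  "mesh_size \<T> = Max (insert 0 {diameter (convex hull V) | V. V \<in> \<T>})"

definition inradius :: "(real^'n) set \<Rightarrow> real" where
  "inradius S = Sup {r. \<exists>z. ball z r \<subseteq> S}"

definition shape_regular :: "(nat \<Rightarrow> (real^'n) set set) \<Rightarrow> bool" where
  "shape_regular T \<longleftrightarrow> (\<exists>c. \<forall>m. \<forall>V\<in>T m. diameter (convex hull V) \<le> c * inradius (convex hull V))"

definition in_Vh :: "(real^'n) set set \<Rightarrow> (real^'n \<Rightarrow> real) \<Rightarrow> bool" where
  "in_Vh \<T> \<phi> \<longleftrightarrow> continuous_on (mesh_domain \<T>) \<phi> \<and>
     (\<forall>V\<in>\<T>. \<exists>a b. \<forall>x\<in>convex hull V. \<phi> x = a \<bullet> x + b)"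

text \<open>Extension to the closure of Omega, constant along outer normals of the mesh domain,
realised via the nearest-point projection onto the mesh domain.\<close>
definition mesh_ext :: "(real^'n) set set \<Rightarrow> (real^'n \<Rightarrow> real) \<Rightarrow> real^'n \<Rightarrow> real" where
  "mesh_ext \<T> \<phi> y = \<phi> (closest_point (mesh_domain \<T>) y)"

definition psd :: "real^'n^'n \<Rightarrow> bool" where
  "psd B \<longleftrightarrow> transpose B = B \<and> (\<forall>v. 0 \<le> v \<bullet> (B *v v))"

definition S1 :: "(real^'n^'n) set" where
  "S1 = {B. psd B \<and> trace B = 1}"

definition diagonal_mat :: "real^'n^'n \<Rightarrow> bool" where
  "diagonal_mat L \<longleftrightarrow> (\<forall>i j. i \<noteq> j \<longrightarrow> L $ i $ j = 0)"

definition ctrl_map :: "(real^'n^'n) \<times> (real^'n^'n) \<Rightarrow> real^'n^'n" where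
  "ctrl_map p = fst p ** snd p ** transpose (fst p)"

definition admissible_controls :: "((real^'n^'n) \<times> (real^'n^'n)) set \<Rightarrow> real \<Rightarrow> bool" where
  "admissible_controls F C \<longleftrightarrow> compact F \<and> C > 0 \<and> bij_betw ctrl_map F S1 \<and>
     (\<forall>(sig, lam)\<in>F. diagonal_mat lam \<and> (\<forall>j. lam $ j $ j \<ge> 0) \<and> trace lam = C)"

definition ctrl_of :: "((real^'n^'n) \<times> (real^'n^'n)) set \<Rightarrow> real^'n^'n \<Rightarrow> (real^'n^'n) \<times> (real^'n^'n)" where
  "ctrl_of F B = the_inv_into F ctrl_map B"

definition scheme_L ::
  "((real^'n^'n) \<times> (real^'n^'n)) set \<Rightarrow> (real^'n \<Rightarrow> real) \<Rightarrow> (real^'n \<Rightarrow> real) \<Rightarrow>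
   (real^'n) set set \<Rightarrow> (real^'n \<Rightarrow> real) \<Rightarrow> real^'n^'n \<Rightarrow> real \<Rightarrow> (real^'n \<Rightarrow> real) \<Rightarrow> real^'n \<Rightarrow> real" where
  "scheme_L F f g \<T> k B s \<phi> x =
     (let sig = fst (ctrl_of F B); lam = snd (ctrl_of F B); kk = k x in
      if x \<in> inodes \<T> then
        - (\<Sum>j\<in>UNIV. lam $ j $ j *
             (\<phi> (x - kk *\<^sub>R column j sig) - 2 * s + \<phi> (x + kk *\<^sub>R column j sig)) / kk\<^sup>2)
        + f x * root CARD('n) (det B)
      else s - g x)"

definition scheme_H ::
  "((real^'n^'n) \<times> (real^'n^'n)) set \<Rightarrow> (real^'n \<Rightarrow> real) \<Rightarrow> (real^'n \<Rightarrow> real) \<Rightarrow>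
   (real^'n) set set \<Rightarrow> (real^'n \<Rightarrow> real) \<Rightarrow> real \<Rightarrow> (real^'n \<Rightarrow> real) \<Rightarrow> real^'n \<Rightarrow> real" where
  "scheme_H F f g \<T> k s \<phi> x = (SUP B\<in>S1. scheme_L F f g \<T> k B s \<phi> x)"

definition discrete_solution ::
  "((real^'n^'n) \<times> (real^'n^'n)) set \<Rightarrow> (real^'n \<Rightarrow> real) \<Rightarrow> (real^'n \<Rightarrow> real) \<Rightarrow>
   (real^'n) set set \<Rightarrow> (real^'n \<Rightarrow> real) \<Rightarrow> (real^'n \<Rightarrow> real) \<Rightarrow> bool" where
  "discrete_solution F f g \<T> k u \<longleftrightarrow> in_Vh \<T> u \<and>
     (\<forall>x\<in>nodes \<T>. scheme_H F f g \<T> k (u x) (mesh_ext \<T> u) x = 0)"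

end

theory Submission
  imports Defs
begin

text \<open>
  At a boundary point x0, strict convexity gives a linear form a with a \<bullet> (y - x0) > 0 for
  every other point y of the closure. Adding a large multiple of it to a quadratic with
  Hessian 2A I produces, for every \<epsilon> > 0, a function below g on the boundary that is within
  \<epsilon> + L |y - x0| of g(x0) everywhere. When 2A exceeds the bound on the source term
  f det(B)^(1/d), such a quadratic cannot touch the discrete solution from below at an
  interior node, because the scheme would be negative there; since the difference with the
  piecewise linear u_h is convex on each simplex, its maximum sits at a node, and boundary
  nodes carry the value g. The same barrier for -g bounds u_h from above. So u_h is within
  \<epsilon> + L |y - x0| of g(x0) uniformly in the mesh, and since interior points close to x0 are
  eventually covered by the meshes (K1), the closest-point extension of u_h tends to g(x0).
\<close>

section \<open>Quadratics, controls and second differences\<close>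

lemma norm_convex_comb_power2:
  fixes a b :: "'a::real_inner"
  assumes "u + v = 1"
  shows "(norm (u *\<^sub>R a + v *\<^sub>R b))\<^sup>2 = u * (norm a)\<^sup>2 + v * (norm b)\<^sup>2 - u * v * (norm (a - b))\<^sup>2"
proof -
  have v: "v = 1 - u" using assms by simp
  show ?thesis unfolding power2_norm_eq_inner v
    by (simp add: inner_add_left inner_add_right inner_diff_left inner_diff_right inner_commute algebra_simps)
qed

lemma convex_on_quadratic:
  fixes z :: "'a::real_inner"
  assumes "0 \<le> A" "convex S"
  shows "convex_on S (\<lambda>y. c + b \<bullet> y + A * (norm (y - z))\<^sup>2)"
  unfolding convex_on_def
proof (intro conjI assms(2) ballI allI impI)
  fix x y :: 'a and u v :: real
  assume uv: "0 \<le> u" "0 \<le> v" "u + v = 1"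
  have "u *\<^sub>R x + v *\<^sub>R y - z = u *\<^sub>R (x - z) + v *\<^sub>R (y - z)"
    using uv(3) by (simp add: algebra_simps flip: scaleR_add_left)
  then have "(norm (u *\<^sub>R x + v *\<^sub>R y - z))\<^sup>2 \<le> u * (norm (x - z))\<^sup>2 + v * (norm (y - z))\<^sup>2"
    using uv by (simp add: norm_convex_comb_power2)
  then have "A * (norm (u *\<^sub>R x + v *\<^sub>R y - z))\<^sup>2 \<le> A * (u * (norm (x - z))\<^sup>2 + v * (norm (y - z))\<^sup>2)"
    using assms(1) by (rule mult_left_mono)
  moreover have "c = u * c + v * c"
    using uv(3) by (metis distrib_right mult_1)
  ultimately show "c + b \<bullet> (u *\<^sub>R x + v *\<^sub>R y) + A * (norm (u *\<^sub>R x + v *\<^sub>R y - z))\<^sup>2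
      \<le> u * (c + b \<bullet> x + A * (norm (x - z))\<^sup>2) + v * (c + b \<bullet> y + A * (norm (y - z))\<^sup>2)"
    by (simp add: inner_add_right algebra_simps)
qed

lemma second_difference_quadratic:
  fixes z b :: "'a::real_inner" and c A :: real
  defines "q \<equiv> \<lambda>y. c + b \<bullet> y + A * (norm (y - z))\<^sup>2"
  shows "q (x - h *\<^sub>R s) - 2 * q x + q (x + h *\<^sub>R s) = 2 * A * h\<^sup>2 * (norm s)\<^sup>2"
  unfolding q_def power2_norm_eq_inner
  by (simp add: inner_add_left inner_add_right inner_diff_left inner_diff_right inner_commute
      algebra_simps power2_eq_square)

lemma trace_ctrl_map:
  fixes sig lam :: "real^'n^'n"
  assumes "diagonal_mat lam"
  shows "trace (ctrl_map (sig, lam)) = (\<Sum>j\<in>UNIV. lam$j$j * (norm (column j sig))\<^sup>2)"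
proof -
  have "(sig ** lam)$i$l = sig$i$l * lam$l$l" for i l
  proof -
    have "(sig ** lam)$i$l = (\<Sum>k\<in>UNIV. sig$i$k * lam$k$l)"
      by (simp add: matrix_matrix_mult_def)
    also have "\<dots> = (\<Sum>k\<in>UNIV. if k = l then sig$i$l * lam$l$l else 0)"
      using assms unfolding diagonal_mat_def by (intro sum.cong) auto
    finally
    show ?thesis by simp
  qed
  then have "trace (ctrl_map (sig, lam)) = (\<Sum>i\<in>UNIV. \<Sum>l\<in>UNIV. sig$i$l * lam$l$l * sig$i$l)"
    by (simp add: ctrl_map_def trace_def matrix_matrix_mult_def[of "sig ** lam"] transpose_def)
  also have "\<dots> = (\<Sum>l\<in>UNIV. \<Sum>i\<in>UNIV. sig$i$l * lam$l$l * sig$i$l)"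
    by (rule sum.swap)
  also have "\<dots> = (\<Sum>j\<in>UNIV. lam$j$j * (norm (column j sig))\<^sup>2)"
    by (simp add: power2_norm_eq_inner inner_vec_def column_def sum_distrib_left algebra_simps)
  finally show ?thesis .
qed

lemma admissible_controls_ctrl_of:
  assumes "admissible_controls F C" "B \<in> S1"
  shows "ctrl_of F B \<in> F" "ctrl_map (ctrl_of F B) = B"
proof -
  have inj: "inj_on ctrl_map F" and im: "ctrl_map ` F = S1"
    using assms(1) by (auto simp: admissible_controls_def bij_betw_def)
  show "ctrl_of F B \<in> F" "ctrl_map (ctrl_of F B) = B"
    using assms(2) im the_inv_into_into[OF inj] f_the_inv_into_f[OF inj] by (auto simp: ctrl_of_def)
qed

lemma admissible_controls_compact_S1:
  fixes F :: "((real^'n^'n) \<times> (real^'n^'n)) set"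
  assumes "admissible_controls F C"
  shows "compact (S1 :: (real^'n^'n) set)"
proof -
  have "continuous_on F (ctrl_map :: _ \<Rightarrow> real^'n^'n)"
    unfolding ctrl_map_def matrix_matrix_mult_def transpose_def by (intro continuous_intros)
  moreover have "compact F" "ctrl_map ` F = S1"
    using assms by (auto simp: admissible_controls_def bij_betw_def)
  ultimately show ?thesis by (metis compact_continuous_image)
qed

lemma scaled_identity_in_S1:
  defines "B0 \<equiv> (1 / real CARD('n)) *\<^sub>R (mat 1 :: real^'n^'n)"
  shows "B0 \<in> S1" "0 \<le> det B0"
proof -
  have "B0 *v v = (1 / real CARD('n)) *\<^sub>R (mat 1 *v v)" for v
    by (simp add: B0_def vec_eq_iff matrix_vector_mult_def sum_distrib_left mult.assoc)
  then have "v \<bullet> (B0 *v v) \<ge> 0" for v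
    by simp
  moreover have "transpose B0 = B0"
    by (simp add: B0_def transpose_def mat_def vec_eq_iff)
  ultimately have "psd B0"
    by (simp add: psd_def)
  moreover have "trace B0 = 1"
    by (simp add: B0_def trace_def mat_def)
  ultimately show "B0 \<in> S1" by (simp add: S1_def)
  have "B0 = (\<chi> i. (1 / real CARD('n)) *s (mat 1 :: real^'n^'n) $ i)"
    by (simp add: B0_def vec_eq_iff mat_def)
  then have "det B0 = (1 / real CARD('n)) ^ CARD('n)"
    using det_rows_mul[of "\<lambda>_. 1 / real CARD('n)" "\<lambda>i. (mat 1 :: real^'n^'n) $ i"] by simp
  then show "0 \<le> det B0" by simp
qed

lemma source_term_bounded:
  fixes F :: "((real^'n^'n) \<times> (real^'n^'n)) set" and f :: "'a \<Rightarrow> real"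
  assumes "bounded (f ` \<Omega>)" "admissible_controls F C"
  obtains Q where "\<forall>x\<in>\<Omega>. \<forall>B\<in>(S1::(real^'n^'n) set). f x * root CARD('n) (det B) \<le> Q"
proof -
  have "continuous_on UNIV (det :: real^'n^'n \<Rightarrow> real)"
    unfolding det_def by (intro continuous_intros)
  then have "compact (det ` (S1::(real^'n^'n) set))"
    using admissible_controls_compact_S1[OF assms(2)] continuous_on_subset compact_continuous_image
    by blast
  then obtain D where "\<forall>t\<in>det ` (S1::(real^'n^'n) set). norm t \<le> D"
    using compact_imp_bounded bounded_iff by blast
  then have D: "\<forall>B\<in>(S1::(real^'n^'n) set). \<bar>det B\<bar> \<le> D"
    by auto
  obtain M where M: "\<forall>x\<in>\<Omega>. \<bar>f x\<bar> \<le> M"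
    using assms(1) unfolding bounded_iff by auto
  have "f x * root CARD('n) (det B) \<le> M * root CARD('n) D"
    if "x \<in> \<Omega>" "B \<in> S1" for x and B :: "real^'n^'n"
  proof -
    have "\<bar>root CARD('n) (det B)\<bar> = root CARD('n) \<bar>det B\<bar>"
      by (simp add: real_root_abs)
    also have "\<dots> \<le> root CARD('n) D"
      using D that(2) by (intro real_root_le_mono) auto
    finally have "\<bar>root CARD('n) (det B)\<bar> \<le> root CARD('n) D" .
    then have "\<bar>f x\<bar> * \<bar>root CARD('n) (det B)\<bar> \<le> M * root CARD('n) D"
      using M that(1) by (intro mult_mono) auto
    then show ?thesis
      by (metis abs_ge_self abs_mult order_trans)
  qed
  then show ?thesis using that by blast
qed

lemma second_diff_sum_ge_at_max:
  fixes sig lam :: "real^'n^'n" and b z x :: "real^'n" and c A h :: real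
    and \<phi> :: "real^'n \<Rightarrow> real"
  defines "q \<equiv> \<lambda>y. c + b \<bullet> y + A * (norm (y - z))\<^sup>2"
  assumes diag: "diagonal_mat lam" and lam_nonneg: "\<forall>j. 0 \<le> lam$j$j"
    and trace: "trace (ctrl_map (sig, lam)) = 1" and h: "h \<noteq> 0"
    and max: "\<forall>j. \<forall>p\<in>{x - h *\<^sub>R column j sig, x + h *\<^sub>R column j sig}. q p - \<phi> p \<le> q x - \<phi> x"
  shows "2 * A \<le> (\<Sum>j\<in>UNIV. lam$j$j *
           (\<phi> (x - h *\<^sub>R column j sig) - 2 * \<phi> x + \<phi> (x + h *\<^sub>R column j sig)) / h\<^sup>2)"
proof -
  have "(\<Sum>j\<in>UNIV. lam$j$j * (2 * A * (norm (column j sig))\<^sup>2))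
      = 2 * A * trace (ctrl_map (sig, lam))"
    unfolding trace_ctrl_map[OF diag] by (simp add: sum_distrib_left mult.left_commute)
  then have "2 * A = (\<Sum>j\<in>UNIV. lam$j$j * (2 * A * (norm (column j sig))\<^sup>2))"
    using trace by simp
  also have "\<dots> = (\<Sum>j\<in>UNIV. lam$j$j *
      (q (x - h *\<^sub>R column j sig) - 2 * q x + q (x + h *\<^sub>R column j sig)) / h\<^sup>2)"
    using h unfolding q_def second_difference_quadratic by (simp add: mult.assoc)
  also have "\<dots> \<le> (\<Sum>j\<in>UNIV. lam$j$j *
      (\<phi> (x - h *\<^sub>R column j sig) - 2 * \<phi> x + \<phi> (x + h *\<^sub>R column j sig)) / h\<^sup>2)"
  proof (intro sum_mono divide_right_mono mult_left_mono)
    fix j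
    show "q (x - h *\<^sub>R column j sig) - 2 * q x + q (x + h *\<^sub>R column j sig)
        \<le> \<phi> (x - h *\<^sub>R column j sig) - 2 * \<phi> x + \<phi> (x + h *\<^sub>R column j sig)"
    proof -
      have "q (x - h *\<^sub>R column j sig) - \<phi> (x - h *\<^sub>R column j sig) \<le> q x - \<phi> x"
        "q (x + h *\<^sub>R column j sig) - \<phi> (x + h *\<^sub>R column j sig) \<le> q x - \<phi> x"
        using max by blast+
      then show ?thesis by linarith
    qed
  qed (use lam_nonneg in auto)
  finally show ?thesis .
qed

section \<open>Maximum principle on simplicial meshes\<close>

lemma simplicial_partition_finite:
  assumes "simplicial_partition T"
  shows "finite T" "\<forall>V\<in>T. finite V"
  using assms by (auto simp: simplicial_partition_def simplex_verts_def)

lemma compact_mesh_domain: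
  assumes "simplicial_partition T"
  shows "compact (mesh_domain T)"
  unfolding mesh_domain_def using simplicial_partition_finite[OF assms]
  by (intro compact_UN finite_imp_compact_convex_hull) auto

lemma nodes_subset_mesh_domain: "nodes T \<subseteq> mesh_domain T"
  unfolding nodes_def mesh_domain_def using hull_subset by fastforce

lemma convex_pieces_max_at_vertex:
  fixes \<psi> :: "'a::real_vector \<Rightarrow> real"
  assumes fin: "finite T" "\<forall>V\<in>T. finite V" and ne: "(\<Union>V\<in>T. convex hull V) \<noteq> {}"
    and cv: "\<forall>V\<in>T. \<exists>q. convex_on (convex hull V) q \<and> (\<forall>y\<in>convex hull V. \<psi> y = q y)"
  obtains x where "x \<in> \<Union>T" "\<forall>y\<in>(\<Union>V\<in>T. convex hull V). \<psi> y \<le> \<psi> x"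
proof -
  have fN: "finite (\<Union>T)" "\<Union>T \<noteq> {}"
    using fin ne by auto
  define M where "M = Max (\<psi> ` \<Union>T)"
  have "M \<in> \<psi> ` \<Union>T"
    unfolding M_def using fN by (intro Max_in) auto
  then obtain x where x: "x \<in> \<Union>T" "\<psi> x = M"
    by blast
  have "\<psi> y \<le> M" if V: "V \<in> T" "y \<in> convex hull V" for V y
  proof -
    obtain q where q: "convex_on (convex hull V) q" "\<forall>y\<in>convex hull V. \<psi> y = q y"
      using cv V(1) by blast
    have "\<forall>w\<in>V. q w \<le> M"
    proof
      fix w assume "w \<in> V"
      then have "q w = \<psi> w"
        using q(2) hull_inc[of w V convex] by simp
      also have "\<dots> \<le> M"
        unfolding M_def using fN(1) \<open>w \<in> V\<close> V(1) by (intro Max_ge) auto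
      finally show "q w \<le> M" .
    qed
    then have "q y \<le> M"
      using convex_on_convex_hull_bound[OF q(1)] V(2) by blast
    then show ?thesis
      using q(2) V(2) by simp
  qed
  then show ?thesis
    using that[OF x(1)] x(2) by blast
qed

lemma quadratic_minus_piecewise_affine_max_at_node:
  fixes b z :: "real^'n" and c A :: real and \<phi> :: "real^'n \<Rightarrow> real"
  defines "q \<equiv> \<lambda>y. c + b \<bullet> y + A * (norm (y - z))\<^sup>2"
  assumes part: "simplicial_partition T" and ne: "mesh_domain T \<noteq> {}" and A: "0 \<le> A"
    and affine: "\<forall>V\<in>T. \<exists>a \<beta>. \<forall>y\<in>convex hull V. \<phi> y = a \<bullet> y + \<beta>"
  obtains x where "x \<in> nodes T" "\<forall>y\<in>mesh_domain T. q y - \<phi> y \<le> q x - \<phi> x"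
proof -
  have pieces: "\<forall>V\<in>T. \<exists>p. convex_on (convex hull V) p \<and> (\<forall>y\<in>convex hull V. q y - \<phi> y = p y)"
  proof
    fix V assume V: "V \<in> T"
    obtain a \<beta> where ab: "\<forall>y\<in>convex hull V. \<phi> y = a \<bullet> y + \<beta>"
      using affine V by blast
    have "\<forall>y\<in>convex hull V. q y - \<phi> y = (c - \<beta>) + (b - a) \<bullet> y + A * (norm (y - z))\<^sup>2"
      using ab by (simp add: q_def inner_diff_left)
    then show "\<exists>p. convex_on (convex hull V) p \<and> (\<forall>y\<in>convex hull V. q y - \<phi> y = p y)"
      using convex_on_quadratic[OF A convex_convex_hull] by blast
  qed
  have "(\<Union>V\<in>T. convex hull V) \<noteq> {}"
    using ne by (simp add: mesh_domain_def)
  then obtain x where "x \<in> \<Union>T" "\<forall>y\<in>(\<Union>V\<in>T. convex hull V). q y - \<phi> y \<le> q x - \<phi> x"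
    using convex_pieces_max_at_vertex[OF simplicial_partition_finite[OF part] _ pieces] by blast
  then show thesis
    by (intro that) (simp_all add: nodes_def mesh_domain_def)
qed

section \<open>Discrete comparison with quadratic barriers\<close>

definition second_diff_op ::
  "((real^'n^'n) \<times> (real^'n^'n)) set \<Rightarrow> (real^'n \<Rightarrow> real) \<Rightarrow> (real^'n \<Rightarrow> real) \<Rightarrow>
   real^'n^'n \<Rightarrow> real^'n \<Rightarrow> real" where
  "second_diff_op F k \<phi> B x =
     (let sig = fst (ctrl_of F B); lam = snd (ctrl_of F B) in
      \<Sum>j\<in>UNIV. lam $ j $ j *
        (\<phi> (x - k x *\<^sub>R column j sig) - 2 * \<phi> x + \<phi> (x + k x *\<^sub>R column j sig)) / (k x)\<^sup>2)"

locale discrete_problem =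
  fixes F :: "((real^'n^'n) \<times> (real^'n^'n)) set" and C :: real
    and f g :: "real^'n \<Rightarrow> real" and \<Omega> :: "(real^'n) set"
    and T :: "(real^'n) set set" and k u :: "real^'n \<Rightarrow> real"
  assumes controls: "admissible_controls F C"
    and partition: "simplicial_partition T"
    and solution: "discrete_solution F f g T k u"
    and k_pos: "\<forall>x\<in>\<Omega>. k x > 0"
    and stencil_in_mesh: "\<forall>x\<in>interior (mesh_domain T). \<forall>(sig, lam)\<in>F. \<forall>j.
                      x + k x *\<^sub>R column j sig \<in> mesh_domain T \<and>
                      x - k x *\<^sub>R column j sig \<in> mesh_domain T"
    and mesh_interior_subset: "interior (mesh_domain T) \<subseteq> \<Omega>"
    and bnodes_subset_frontier: "bnodes T \<subseteq> frontier \<Omega>"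
begin

lemma scheme_H_at_node: "x \<in> nodes T \<Longrightarrow> scheme_H F f g T k (u x) (mesh_ext T u) x = 0"
  using solution by (simp add: discrete_solution_def)

lemma boundary_node:
  assumes "x \<in> nodes T" "x \<notin> inodes T"
  shows "u x = g x" "x \<in> frontier \<Omega>"
proof -
  have "(S1 :: (real^'n^'n) set) \<noteq> {}"
    using scaled_identity_in_S1(1) by blast
  then have "scheme_H F f g T k (u x) (mesh_ext T u) x = u x - g x"
    using assms(2) by (simp add: scheme_H_def scheme_L_def cSUP_const)
  then show "u x = g x"
    using scheme_H_at_node[OF assms(1)] by simp
  show "x \<in> frontier \<Omega>"
    using assms bnodes_subset_frontier by (auto simp: bnodes_def inodes_def)
qed

lemma interior_node:
  assumes "x \<in> inodes T"
  shows "x \<in> interior (mesh_domain T)" "x \<in> \<Omega>" "0 < k x"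
proof -
  have "x \<in> mesh_domain T" "x \<notin> frontier (mesh_domain T)"
    using assms nodes_subset_mesh_domain by (auto simp: inodes_def)
  then show "x \<in> interior (mesh_domain T)"
    using compact_imp_closed[OF compact_mesh_domain[OF partition]]
    by (simp add: frontier_def closure_closed)
  then show "x \<in> \<Omega>" "0 < k x"
    using mesh_interior_subset k_pos by auto
qed

lemma ctrl_of_props:
  assumes "B \<in> S1" "ctrl_of F B = (sig, lam)"
  shows "(sig, lam) \<in> F" "diagonal_mat lam" "\<forall>j. 0 \<le> lam $ j $ j" "trace lam = C"
    "trace (ctrl_map (sig, lam)) = 1"
  using admissible_controls_ctrl_of[OF controls assms(1)] assms controls
  by (auto simp: admissible_controls_def S1_def)

lemma stencil_points_in_mesh:
  assumes "x \<in> inodes T" "B \<in> S1" "ctrl_of F B = (sig, lam)"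
  shows "x - k x *\<^sub>R column j sig \<in> mesh_domain T" "x + k x *\<^sub>R column j sig \<in> mesh_domain T"
  using bspec[OF bspec[OF stencil_in_mesh interior_node(1)[OF assms(1)]] ctrl_of_props(1)[OF assms(2,3)]]
  by auto

lemma scheme_L_at_interior_node:
  assumes "x \<in> inodes T" "B \<in> S1"
  shows "scheme_L F f g T k B (u x) (mesh_ext T u) x
           = f x * root CARD('n) (det B) - second_diff_op F k u B x"
proof -
  obtain sig lam where sl: "ctrl_of F B = (sig, lam)"
    by fastforce
  have "mesh_ext T u (x - k x *\<^sub>R column j sig) = u (x - k x *\<^sub>R column j sig)"
    "mesh_ext T u (x + k x *\<^sub>R column j sig) = u (x + k x *\<^sub>R column j sig)" for j
    using stencil_points_in_mesh[OF assms sl] by (simp_all add: mesh_ext_def closest_point_self)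
  then show ?thesis
    using assms(1) by (simp add: scheme_L_def second_diff_op_def sl Let_def)
qed

text \<open>The sign s treats lower barriers for u (s = 1) and for -u (s = -1) at once.\<close>

lemma touching_interior_node:
  fixes s c A :: real and b z :: "real^'n"
  assumes s: "s = 1 \<or> s = -1" and A: "0 \<le> A"
    and boundary: "\<forall>y\<in>frontier \<Omega>. c + b \<bullet> y + A * (norm (y - z))\<^sup>2 \<le> s * g y"
    and fails: "\<exists>p\<in>mesh_domain T. s * u p < c + b \<bullet> p + A * (norm (p - z))\<^sup>2"
  obtains x where "x \<in> inodes T" "\<forall>B\<in>S1. 2 * A \<le> s * second_diff_op F k u B x"
proof -
  define q where "q = (\<lambda>y. c + b \<bullet> y + A * (norm (y - z))\<^sup>2)"
  have "\<forall>V\<in>T. \<exists>a \<beta>. \<forall>y\<in>convex hull V. s * u y = a \<bullet> y + \<beta>"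
  proof
    fix V assume "V \<in> T"
    then obtain a \<beta> where "\<forall>y\<in>convex hull V. u y = a \<bullet> y + \<beta>"
      using solution unfolding discrete_solution_def in_Vh_def by blast
    then show "\<exists>a \<beta>. \<forall>y\<in>convex hull V. s * u y = a \<bullet> y + \<beta>"
      by (intro exI[of _ "s *\<^sub>R a"] exI[of _ "s * \<beta>"]) (simp add: algebra_simps)
  qed
  moreover obtain p where p: "p \<in> mesh_domain T" "s * u p < q p"
    using fails unfolding q_def by blast
  ultimately obtain x where x: "x \<in> nodes T" "\<forall>y\<in>mesh_domain T. q y - s * u y \<le> q x - s * u x"
    using quadratic_minus_piecewise_affine_max_at_node[OF partition _ A, of "\<lambda>y. s * u y" c b z]
    unfolding q_def by blast
  have positive: "0 < q x - s * u x"
    using x(2) p by fastforce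
  have inode: "x \<in> inodes T"
  proof (rule ccontr)
    assume "x \<notin> inodes T"
    then have "u x = g x" "x \<in> frontier \<Omega>"
      using boundary_node x(1) by auto
    then show False
      using boundary positive unfolding q_def by auto
  qed
  have "2 * A \<le> s * second_diff_op F k u B x" if B: "B \<in> S1" for B
  proof -
    obtain sig lam where sl: "ctrl_of F B = (sig, lam)"
      by fastforce
    note props = ctrl_of_props[OF B sl]
    have "2 * A \<le> (\<Sum>j\<in>UNIV. lam$j$j * (s * u (x - k x *\<^sub>R column j sig) - 2 * (s * u x)
              + s * u (x + k x *\<^sub>R column j sig)) / (k x)\<^sup>2)"
      using second_diff_sum_ge_at_max[OF props(2,3,5), of "k x" x c b A z "\<lambda>y. s * u y"]
        interior_node(3)[OF inode] x(2) stencil_points_in_mesh[OF inode B sl]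
      unfolding q_def by auto
    also have "\<dots> = s * second_diff_op F k u B x"
      by (simp add: second_diff_op_def sl sum_distrib_left algebra_simps)
    finally show ?thesis .
  qed
  then show thesis
    using that inode by blast
qed

lemma lower_barrier_le_solution:
  fixes c A Q :: real and b z :: "real^'n"
  assumes A: "0 \<le> A" "Q < 2 * A"
    and source: "\<forall>x\<in>\<Omega>. \<forall>B\<in>(S1::(real^'n^'n) set). f x * root CARD('n) (det B) \<le> Q"
    and boundary: "\<forall>y\<in>frontier \<Omega>. c + b \<bullet> y + A * (norm (y - z))\<^sup>2 \<le> g y"
  shows "\<forall>p\<in>mesh_domain T. c + b \<bullet> p + A * (norm (p - z))\<^sup>2 \<le> u p"
proof (rule ccontr)
  assume "\<not> ?thesis"
  then have "\<exists>p\<in>mesh_domain T. 1 * u p < c + b \<bullet> p + A * (norm (p - z))\<^sup>2"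
    by (auto simp: not_le)
  moreover have "\<forall>y\<in>frontier \<Omega>. c + b \<bullet> y + A * (norm (y - z))\<^sup>2 \<le> 1 * g y"
    using boundary by simp
  ultimately obtain x where x: "x \<in> inodes T" "\<forall>B\<in>S1. 2 * A \<le> 1 * second_diff_op F k u B x"
    using touching_interior_node[OF _ A(1)] by blast
  have "(S1 :: (real^'n^'n) set) \<noteq> {}"
    using scaled_identity_in_S1(1) by blast
  then have "scheme_H F f g T k (u x) (mesh_ext T u) x \<le> Q - 2 * A"
    unfolding scheme_H_def
  proof (rule cSUP_least)
    fix B :: "real^'n^'n" assume B: "B \<in> S1"
    have "f x * root CARD('n) (det B) \<le> Q" "2 * A \<le> second_diff_op F k u B x"
      using source interior_node(2)[OF x(1)] B x(2) by auto
    then show "scheme_L F f g T k B (u x) (mesh_ext T u) x \<le> Q - 2 * A"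
      unfolding scheme_L_at_interior_node[OF x(1) B] by linarith
  qed
  then show False
    using scheme_H_at_node x(1) A(2) by (simp add: inodes_def)
qed

lemma scheme_L_bdd_above:
  assumes x: "x \<in> inodes T"
  shows "bdd_above ((\<lambda>B. scheme_L F f g T k B (u x) (mesh_ext T u) x) ` S1)"
proof -
  have "compact (u ` mesh_domain T)"
    using solution compact_mesh_domain[OF partition]
    by (intro compact_continuous_image) (auto simp: discrete_solution_def in_Vh_def)
  then obtain U where "\<forall>t\<in>u ` mesh_domain T. norm t \<le> U"
    using compact_imp_bounded bounded_iff by blast
  then have U: "\<forall>p\<in>mesh_domain T. \<bar>u p\<bar> \<le> U"
    by auto
  obtain Q where Q: "\<forall>y\<in>{x}. \<forall>B\<in>(S1::(real^'n^'n) set). f y * root CARD('n) (det B) \<le> Q"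
    using source_term_bounded[OF _ controls, of f "{x}"] by auto
  show ?thesis
  proof (rule bdd_aboveI2)
    fix B :: "real^'n^'n" assume B: "B \<in> S1"
    obtain sig lam where sl: "ctrl_of F B = (sig, lam)"
      by fastforce
    note props = ctrl_of_props[OF B sl]
    have "(\<Sum>j\<in>UNIV. lam$j$j * (- 4 * U) / (k x)\<^sup>2) \<le> second_diff_op F k u B x"
      unfolding second_diff_op_def sl Let_def fst_conv snd_conv
    proof (intro sum_mono divide_right_mono mult_left_mono)
      fix j
      have "\<bar>u (x - k x *\<^sub>R column j sig)\<bar> \<le> U" "\<bar>u x\<bar> \<le> U"
        "\<bar>u (x + k x *\<^sub>R column j sig)\<bar> \<le> U"
        using U stencil_points_in_mesh[OF x B sl] interior_node(1)[OF x] interior_subset by blast+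
      then show "- 4 * U \<le> u (x - k x *\<^sub>R column j sig) - 2 * u x + u (x + k x *\<^sub>R column j sig)"
        by linarith
    qed (use props(3) in auto)
    moreover have "(\<Sum>j\<in>UNIV. lam$j$j * (- 4 * U) / (k x)\<^sup>2) = trace lam * (- 4 * U) / (k x)\<^sup>2"
      unfolding trace_def by (simp only: sum_distrib_right sum_divide_distrib)
    moreover have "f x * root CARD('n) (det B) \<le> Q"
      using Q B by simp
    ultimately show "scheme_L F f g T k B (u x) (mesh_ext T u) x \<le> Q + C * 4 * U / (k x)\<^sup>2"
      unfolding scheme_L_at_interior_node[OF x B] props(4) by simp
  qed
qed

lemma upper_barrier_le_solution:
  fixes c A :: real and b z :: "real^'n"
  assumes A: "0 < A"
    and f_nonneg: "\<forall>x\<in>\<Omega>. 0 \<le> f x"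
    and boundary: "\<forall>y\<in>frontier \<Omega>. c + b \<bullet> y + A * (norm (y - z))\<^sup>2 \<le> - g y"
  shows "\<forall>p\<in>mesh_domain T. c + b \<bullet> p + A * (norm (p - z))\<^sup>2 \<le> - u p"
proof (rule ccontr)
  assume "\<not> ?thesis"
  then have "\<exists>p\<in>mesh_domain T. -1 * u p < c + b \<bullet> p + A * (norm (p - z))\<^sup>2"
    by (auto simp: not_le)
  moreover have "\<forall>y\<in>frontier \<Omega>. c + b \<bullet> y + A * (norm (y - z))\<^sup>2 \<le> -1 * g y"
    using boundary by simp
  ultimately obtain x where x: "x \<in> inodes T" "\<forall>B\<in>S1. 2 * A \<le> -1 * second_diff_op F k u B x"
    using touching_interior_node[OF _ less_imp_le[OF A]] by blast
  define B0 where "B0 = (1 / real CARD('n)) *\<^sub>R (mat 1 :: real^'n^'n)"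
  note B0 = scaled_identity_in_S1[where 'n='n, folded B0_def]
  have "0 \<le> f x * root CARD('n) (det B0)"
    using f_nonneg interior_node(2)[OF x(1)] B0(2) by simp
  then have "2 * A \<le> scheme_L F f g T k B0 (u x) (mesh_ext T u) x"
    using scheme_L_at_interior_node[OF x(1) B0(1)] x(2) B0(1) by force
  also have "\<dots> \<le> scheme_H F f g T k (u x) (mesh_ext T u) x"
    unfolding scheme_H_def by (rule cSUP_upper[OF B0(1) scheme_L_bdd_above[OF x(1)]])
  finally show False
    using scheme_H_at_node x(1) A by (simp add: inodes_def)
qed

end

section \<open>Barriers at a strictly convex boundary\<close>

lemma strictly_convex_domainD:
  assumes "strictly_convex_domain \<Omega>" "x \<in> closure \<Omega>" "y \<in> closure \<Omega>" "x \<noteq> y" "0 < t" "t < 1"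
  shows "(1 - t) *\<^sub>R x + t *\<^sub>R y \<in> \<Omega>"
  using assms unfolding strictly_convex_domain_def by blast

lemma strictly_convex_domain_convex:
  assumes "strictly_convex_domain \<Omega>"
  shows "convex \<Omega>"
  unfolding convex_alt
proof (intro ballI allI impI)
  fix x y and t :: real
  assume xy: "x \<in> \<Omega>" "y \<in> \<Omega>" and t: "0 \<le> t \<and> t \<le> 1"
  show "(1 - t) *\<^sub>R x + t *\<^sub>R y \<in> \<Omega>"
  proof (cases "x = y \<or> t = 0 \<or> t = 1")
    case True
    then show ?thesis using xy by (auto simp flip: scaleR_add_left)
  next
    case False
    then show ?thesis
      using strictly_convex_domainD[OF assms, of x y t] xy t closure_subset by auto
  qed
qed

lemma strictly_convex_domain_strict_support:
  assumes dom: "strictly_convex_domain \<Omega>" and x0: "x0 \<in> frontier \<Omega>"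
  obtains a where "\<forall>y\<in>closure \<Omega>. y \<noteq> x0 \<longrightarrow> a \<bullet> x0 < a \<bullet> y"
proof -
  have "open \<Omega>"
    using dom by (simp add: strictly_convex_domain_def)
  then have x0': "x0 \<in> closure \<Omega>" "x0 \<notin> rel_interior \<Omega>"
    using x0 by (auto simp: frontier_def interior_open rel_interior_open)
  obtain a where a: "\<And>y. y \<in> rel_interior \<Omega> \<Longrightarrow> a \<bullet> x0 < a \<bullet> y"
    using supporting_hyperplane_relative_frontier[OF strictly_convex_domain_convex[OF dom] x0'] by metis
  have "a \<bullet> x0 < a \<bullet> y" if y: "y \<in> closure \<Omega>" "y \<noteq> x0" for y
  proof -
    have "(1 - 1/2) *\<^sub>R x0 + (1/2) *\<^sub>R y \<in> rel_interior \<Omega>"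
      using strictly_convex_domainD[OF dom x0'(1) y(1) y(2)[symmetric], of "1/2"] \<open>open \<Omega>\<close>
      by (simp add: rel_interior_open)
    then have "a \<bullet> x0 < a \<bullet> ((1 - 1/2) *\<^sub>R x0 + (1/2) *\<^sub>R y)"
      by (rule a)
    then show ?thesis
      by (simp add: inner_add_right)
  qed
  then show thesis
    using that by blast
qed

lemma strict_support_gap:
  fixes \<Omega> :: "'a::euclidean_space set"
  assumes "bounded \<Omega>" and a: "\<forall>y\<in>closure \<Omega>. y \<noteq> x0 \<longrightarrow> a \<bullet> x0 < a \<bullet> y" and "0 < \<delta>"
  obtains \<eta> where "0 < \<eta>" "\<forall>y\<in>frontier \<Omega>. \<delta> \<le> dist y x0 \<longrightarrow> \<eta> \<le> a \<bullet> (y - x0)"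
proof -
  define K where "K = frontier \<Omega> \<inter> {y. \<delta> \<le> dist y x0}"
  have "bounded K"
    using bounded_closure[OF assms(1)] by (rule bounded_subset) (auto simp: K_def frontier_closures)
  moreover have "closed K"
    unfolding K_def by (intro closed_Int frontier_closed closed_Collect_le continuous_intros)
  ultimately have "compact K"
    by (simp add: compact_eq_bounded_closed)
  show ?thesis
  proof (cases "K = {}")
    case True
    then show ?thesis
      using that[of 1] by (auto simp: K_def)
  next
    case False
    have "continuous_on K (\<lambda>y. a \<bullet> (y - x0))"
      by (intro continuous_intros)
    then obtain y1 where y1: "y1 \<in> K" "\<forall>y\<in>K. a \<bullet> (y1 - x0) \<le> a \<bullet> (y - x0)"
      using continuous_attains_inf[OF \<open>compact K\<close> False] by blast
    then have "y1 \<in> closure \<Omega>" "y1 \<noteq> x0"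
      using frontier_closures \<open>0 < \<delta>\<close> by (auto simp: K_def)
    then have "0 < a \<bullet> (y1 - x0)"
      using a by (simp add: inner_diff_right)
    then show ?thesis
      using that y1(2) by (auto simp: K_def)
  qed
qed

lemma strict_support_dominates_boundary_data:
  fixes \<Omega> :: "(real^'n) set" and g :: "real^'n \<Rightarrow> real" and \<epsilon> A :: real
  assumes dom: "strictly_convex_domain \<Omega>" and x0: "x0 \<in> frontier \<Omega>"
    and g_cont: "continuous_on (frontier \<Omega>) g" and g_bdd: "bounded (g ` frontier \<Omega>)"
    and \<epsilon>: "0 < \<epsilon>" and A: "0 \<le> A"
  obtains a K where "0 \<le> K"
    "\<forall>y\<in>frontier \<Omega>. g x0 - \<epsilon> + A * (norm (y - x0))\<^sup>2 \<le> g y + K * (a \<bullet> (y - x0))"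
proof -
  obtain a where a: "\<forall>y\<in>closure \<Omega>. y \<noteq> x0 \<longrightarrow> a \<bullet> x0 < a \<bullet> y"
    using strictly_convex_domain_strict_support[OF dom x0] by blast
  have a_nonneg: "0 \<le> a \<bullet> (y - x0)" if "y \<in> frontier \<Omega>" for y
    using a that by (cases "y = x0") (auto simp: frontier_closures inner_diff_right)
  obtain G where G: "\<forall>y\<in>frontier \<Omega>. \<bar>g y\<bar> \<le> G"
    using g_bdd unfolding bounded_iff by auto
  have "bounded \<Omega>"
    using dom by (simp add: strictly_convex_domain_def)
  then have "bounded (frontier \<Omega>)"
    by (rule bounded_subset[OF bounded_closure]) (auto simp: frontier_closures)
  then obtain R where R: "\<forall>y\<in>frontier \<Omega>. norm (y - x0) \<le> R"
    using bounded_any_center[of "frontier \<Omega>" x0] by (auto simp: dist_norm norm_minus_commute)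
  have "continuous_on (frontier \<Omega>) (\<lambda>y. g y - A * (norm (y - x0))\<^sup>2)"
    using g_cont by (intro continuous_intros)
  then obtain \<delta> where \<delta>: "0 < \<delta>" "\<forall>y\<in>frontier \<Omega>. dist y x0 < \<delta> \<longrightarrow>
      dist (g y - A * (norm (y - x0))\<^sup>2) (g x0 - A * (norm (x0 - x0))\<^sup>2) < \<epsilon>"
    using x0 \<epsilon> unfolding continuous_on_iff by blast
  obtain \<eta> where \<eta>: "0 < \<eta>" "\<forall>y\<in>frontier \<Omega>. \<delta> \<le> dist y x0 \<longrightarrow> \<eta> \<le> a \<bullet> (y - x0)"
    using strict_support_gap[OF \<open>bounded \<Omega>\<close> a \<delta>(1)] by blast
  define K where "K = (2 * G + A * R\<^sup>2) / \<eta>"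
  have "0 \<le> G"
    using G x0 by force
  then have K: "0 \<le> K" "K * \<eta> = 2 * G + A * R\<^sup>2"
    using \<eta>(1) A by (auto simp: K_def)
  have "g x0 - \<epsilon> + A * (norm (y - x0))\<^sup>2 \<le> g y + K * (a \<bullet> (y - x0))" if y: "y \<in> frontier \<Omega>" for y
  proof (cases "dist y x0 < \<delta>")
    case True
    then have "g x0 - \<epsilon> + A * (norm (y - x0))\<^sup>2 < g y"
      using \<delta>(2) y unfolding dist_real_def by fastforce
    moreover have "0 \<le> K * (a \<bullet> (y - x0))"
      using K(1) a_nonneg[OF y] by simp
    ultimately show ?thesis
      by linarith
  next
    case False
    then have "K * \<eta> \<le> K * (a \<bullet> (y - x0))"
      using \<eta>(2) y K(1) by (auto intro: mult_left_mono)
    moreover have "A * (norm (y - x0))\<^sup>2 \<le> A * R\<^sup>2"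
      using A R y by (intro mult_left_mono power_mono) auto
    moreover have "\<bar>g y\<bar> \<le> G" "\<bar>g x0\<bar> \<le> G"
      using G y x0 by auto
    ultimately show ?thesis
      using K(2) \<epsilon> by linarith
  qed
  then show thesis
    using that K(1) by blast
qed

lemma boundary_barrier:
  fixes \<Omega> :: "(real^'n) set" and g :: "real^'n \<Rightarrow> real" and \<epsilon> A :: real
  assumes dom: "strictly_convex_domain \<Omega>" and x0: "x0 \<in> frontier \<Omega>"
    and g_cont: "continuous_on (frontier \<Omega>) g" and g_bdd: "bounded (g ` frontier \<Omega>)"
    and \<epsilon>: "0 < \<epsilon>" and A: "0 \<le> A"
  obtains c b L where "0 \<le> L"
    "\<forall>y\<in>frontier \<Omega>. c + b \<bullet> y + A * (norm (y - x0))\<^sup>2 \<le> g y"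
    "\<forall>y. g x0 - \<epsilon> - L * dist y x0 \<le> c + b \<bullet> y + A * (norm (y - x0))\<^sup>2"
proof -
  obtain a K where K: "0 \<le> K"
    "\<forall>y\<in>frontier \<Omega>. g x0 - \<epsilon> + A * (norm (y - x0))\<^sup>2 \<le> g y + K * (a \<bullet> (y - x0))"
    by (rule strict_support_dominates_boundary_data[OF dom x0 g_cont g_bdd \<epsilon> A])
  define c where "c = g x0 - \<epsilon> + K * (a \<bullet> x0)"
  define b where "b = - (K *\<^sub>R a)"
  have v: "c + b \<bullet> y = g x0 - \<epsilon> - K * (a \<bullet> (y - x0))" for y
    by (simp add: c_def b_def inner_diff_right algebra_simps)
  show thesis
  proof (rule that[of "K * norm a" c b])
    show "0 \<le> K * norm a"
      using K(1) by simp
    show "\<forall>y\<in>frontier \<Omega>. c + b \<bullet> y + A * (norm (y - x0))\<^sup>2 \<le> g y"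
      unfolding v using K(2) by fastforce
    show "\<forall>y. g x0 - \<epsilon> - K * norm a * dist y x0 \<le> c + b \<bullet> y + A * (norm (y - x0))\<^sup>2"
    proof
      fix y
      have "a \<bullet> (y - x0) \<le> norm a * dist y x0"
        using norm_cauchy_schwarz[of a "y - x0"] by (simp add: dist_norm)
      then have "K * (a \<bullet> (y - x0)) \<le> K * norm a * dist y x0"
        using K(1) by (simp add: mult_left_mono mult.assoc)
      moreover have "0 \<le> A * (norm (y - x0))\<^sup>2"
        using A by simp
      ultimately show "g x0 - \<epsilon> - K * norm a * dist y x0 \<le> c + b \<bullet> y + A * (norm (y - x0))\<^sup>2"
        unfolding v by linarith
    qed
  qed
qed

section \<open>Convergence at the boundary\<close>

lemma inner_layer_point_near_frontier:
  fixes \<Omega> :: "(real^'n) set"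
  assumes "open \<Omega>" "x0 \<in> frontier \<Omega>" "0 < r"
  obtains i z where "0 < i" "z \<in> inner_layer \<Omega> i" "dist z x0 < r"
proof -
  have "x0 \<in> closure \<Omega>"
    using assms(2) by (simp add: frontier_def)
  then obtain z where z: "z \<in> \<Omega>" "dist z x0 < r"
    using assms(3) closure_approachable by blast
  have "z \<notin> frontier \<Omega>"
    using z(1) assms(1) by (simp add: frontier_def interior_open)
  then have "0 < infdist z (frontier \<Omega>)"
    using assms(2) by (intro infdist_pos_not_in_closed) auto
  then obtain i :: nat where "i \<noteq> 0" "inverse (real i) < infdist z (frontier \<Omega>)"
    using real_arch_inverse by blast
  then show thesis
    using that z by (simp add: inner_layer_def divide_inverse)
qed

lemma mesh_domains_approach_frontier:
  fixes \<Omega> :: "(real^'n) set" and D :: "nat \<Rightarrow> (real^'n) set"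
  assumes "open \<Omega>" "x0 \<in> frontier \<Omega>"
    and cover: "\<forall>i>0. \<forall>\<^sub>F m in sequentially. inner_layer \<Omega> i \<subseteq> D m"
  shows "\<forall>r>0. \<exists>z. dist z x0 < r \<and> (\<forall>\<^sub>F m in sequentially. z \<in> D m)"
proof (intro allI impI)
  fix r :: real assume "0 < r"
  then obtain i z where iz: "0 < i" "z \<in> inner_layer \<Omega> i" "dist z x0 < r"
    by (rule inner_layer_point_near_frontier[OF assms(1,2)])
  then have "\<forall>\<^sub>F m in sequentially. z \<in> D m"
    using cover by (blast intro: eventually_mono)
  then show "\<exists>z. dist z x0 < r \<and> (\<forall>\<^sub>F m in sequentially. z \<in> D m)"
    using iz(3) by blast
qed

lemma dist_closest_point_le:
  fixes D :: "'a::{real_inner,heine_borel} set"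
  assumes "closed D" "z \<in> D"
  shows "dist (closest_point D y) x0 \<le> 2 * dist y x0 + dist z x0"
proof -
  have "dist (closest_point D y) x0 \<le> dist y (closest_point D y) + dist y x0"
    by (rule dist_triangle3)
  also have "\<dots> \<le> dist y z + dist y x0"
    using closest_point_le[OF assms] by simp
  also have "\<dots> \<le> 2 * dist y x0 + dist z x0"
    using dist_triangle2[of y z x0] by simp
  finally show ?thesis .
qed

lemma tendsto_closest_point_comp:
  fixes D :: "nat \<Rightarrow> 'a::{real_inner,heine_borel} set" and \<phi> :: "nat \<Rightarrow> 'a \<Rightarrow> real"
  assumes closed: "\<forall>m. closed (D m)"
    and estimate: "\<forall>\<epsilon>>0. \<exists>L\<ge>0. \<forall>m. \<forall>p\<in>D m. \<bar>\<phi> m p - l\<bar> \<le> \<epsilon> + L * dist p x0"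
    and approach: "\<forall>r>0. \<exists>z. dist z x0 < r \<and> (\<forall>\<^sub>F m in sequentially. z \<in> D m)"
  shows "((\<lambda>(m, y). \<phi> m (closest_point (D m) y)) \<longlongrightarrow> l) (sequentially \<times>\<^sub>F nhds x0)"
  unfolding tendsto_iff
proof (intro allI impI)
  fix e :: real assume "0 < e"
  then obtain L where L: "0 \<le> L" "\<forall>m. \<forall>p\<in>D m. \<bar>\<phi> m p - l\<bar> \<le> e / 2 + L * dist p x0"
    using estimate by (meson half_gt_zero)
  define r where "r = e / (6 * (L + 1))"
  have r: "0 < r" "L * (3 * r) < e / 2"
    using \<open>0 < e\<close> L(1) by (auto simp: r_def field_simps)
  obtain z where z: "dist z x0 < r" "\<forall>\<^sub>F m in sequentially. z \<in> D m"
    using approach r(1) by blast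
  have close: "\<bar>\<phi> m (closest_point (D m) y) - l\<bar> < e" if "z \<in> D m" "dist y x0 < r" for m y
  proof -
    have "dist (closest_point (D m) y) x0 < 3 * r"
      using dist_closest_point_le[OF spec[OF closed] that(1), of y x0] z(1) that(2) by linarith
    then have "L * dist (closest_point (D m) y) x0 \<le> L * (3 * r)"
      using L(1) by (intro mult_left_mono) auto
    moreover have "closest_point (D m) y \<in> D m"
      using closest_point_exists(1)[OF spec[OF closed]] that(1) by blast
    ultimately show ?thesis
      using L(2) r(2) by fastforce
  qed
  show "\<forall>\<^sub>F p in sequentially \<times>\<^sub>F nhds x0. dist ((\<lambda>(m, y). \<phi> m (closest_point (D m) y)) p) l < e"
    unfolding eventually_prod_filter
  proof (intro exI[of _ "\<lambda>m. z \<in> D m"] exI[of _ "\<lambda>y. dist y x0 < r"] conjI allI impI)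
    show "\<forall>\<^sub>F y in nhds x0. dist y x0 < r"
      unfolding eventually_nhds_metric using r(1) by blast
  qed (use z(2) close in \<open>auto simp: dist_real_def\<close>)
qed

lemma nhds_inf_principal_ne_bot:
  fixes S :: "'a::metric_space set"
  assumes "x \<in> closure S"
  shows "inf (nhds x) (principal S) \<noteq> bot"
proof
  assume "inf (nhds x) (principal S) = bot"
  then have "eventually (\<lambda>_. False) (inf (nhds x) (principal S))"
    by simp
  then obtain d where "0 < d" "\<forall>y. dist y x < d \<longrightarrow> y \<in> S \<longrightarrow> False"
    unfolding eventually_inf_principal eventually_nhds_metric by blast
  then show False
    using assms closure_approachable by blast
qed

lemma discrete_solutions_boundary_estimate:
  fixes \<Omega> :: "(real^'n) set" and f g :: "real^'n \<Rightarrow> real"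
    and F :: "((real^'n^'n) \<times> (real^'n^'n)) set"
    and T :: "nat \<Rightarrow> (real^'n) set set" and k u :: "nat \<Rightarrow> real^'n \<Rightarrow> real"
  assumes dom: "strictly_convex_domain \<Omega>" and x0: "x0 \<in> frontier \<Omega>"
    and f_nonneg: "\<forall>x\<in>\<Omega>. 0 \<le> f x" and f_bdd: "bounded (f ` \<Omega>)"
    and g_bdd: "bounded (g ` frontier \<Omega>)" and g_cont: "continuous_on (frontier \<Omega>) g"
    and ctrl: "admissible_controls F C"
    and problems: "\<forall>m. discrete_problem F C f g \<Omega> (T m) (k m) (u m)"
    and \<epsilon>: "0 < \<epsilon>"
  obtains L where "0 \<le> L" "\<forall>m. \<forall>p\<in>mesh_domain (T m). \<bar>u m p - g x0\<bar> \<le> \<epsilon> + L * dist p x0"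
proof -
  obtain Q where Q: "\<forall>x\<in>\<Omega>. \<forall>B\<in>(S1::(real^'n^'n) set). f x * root CARD('n) (det B) \<le> Q"
    using source_term_bounded[OF f_bdd ctrl] by blast
  define A where "A = \<bar>Q\<bar> + 1"
  have A: "0 \<le> A" "Q < 2 * A"
    by (auto simp: A_def)
  obtain c b L where L: "0 \<le> L"
    "\<forall>y\<in>frontier \<Omega>. c + b \<bullet> y + A * (norm (y - x0))\<^sup>2 \<le> g y"
    "\<forall>y. g x0 - \<epsilon> - L * dist y x0 \<le> c + b \<bullet> y + A * (norm (y - x0))\<^sup>2"
    by (rule boundary_barrier[OF dom x0 g_cont g_bdd \<epsilon> A(1)])
  have "continuous_on (frontier \<Omega>) (\<lambda>y. - g y)" "bounded ((\<lambda>y. - g y) ` frontier \<Omega>)"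
    using g_cont g_bdd by (auto intro: continuous_intros simp flip: image_image)
  then obtain c' b' L' where L': "0 \<le> L'"
    "\<forall>y\<in>frontier \<Omega>. c' + b' \<bullet> y + 1 * (norm (y - x0))\<^sup>2 \<le> - g y"
    "\<forall>y. - g x0 - \<epsilon> - L' * dist y x0 \<le> c' + b' \<bullet> y + 1 * (norm (y - x0))\<^sup>2"
    by (rule boundary_barrier[OF dom x0 _ _ \<epsilon>, of "\<lambda>y. - g y" 1]) simp_all
  show thesis
  proof (rule that[of "max L L'"])
    show "0 \<le> max L L'"
      using L(1) by simp
    show "\<forall>m. \<forall>p\<in>mesh_domain (T m). \<bar>u m p - g x0\<bar> \<le> \<epsilon> + max L L' * dist p x0"
    proof (intro allI ballI)
      fix m p assume p: "p \<in> mesh_domain (T m)"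
      interpret discrete_problem F C f g \<Omega> "T m" "k m" "u m"
        using problems by blast
      have "g x0 - \<epsilon> - L * dist p x0 \<le> u m p" "- g x0 - \<epsilon> - L' * dist p x0 \<le> - u m p"
        using lower_barrier_le_solution[OF A Q L(2)] upper_barrier_le_solution[OF _ f_nonneg L'(2)]
          L(3) L'(3) p by (auto intro: order_trans)
      moreover have "L * dist p x0 \<le> max L L' * dist p x0" "L' * dist p x0 \<le> max L L' * dist p x0"
        by (simp_all add: mult_right_mono)
      ultimately show "\<bar>u m p - g x0\<bar> \<le> \<epsilon> + max L L' * dist p x0"
        by linarith
    qed
  qed
qed

theorem lemma6p4:
  fixes \<Omega> :: "(real^'n) set"
    and f g :: "real^'n \<Rightarrow> real"
    and F :: "((real^'n^'n) \<times> (real^'n^'n)) set"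
    and C :: real
    and T :: "nat \<Rightarrow> (real^'n) set set"
    and k :: "nat \<Rightarrow> real^'n \<Rightarrow> real"
    and u :: "nat \<Rightarrow> real^'n \<Rightarrow> real"
  assumes dim: "CARD('n) \<ge> 2"
    and dom: "strictly_convex_domain \<Omega>"
    and f_nonneg: "\<forall>x\<in>\<Omega>. f x \<ge> 0"
    and f_bdd: "bounded (f ` \<Omega>)"
    and f_cont: "continuous_on \<Omega> f"
    and g_bdd: "bounded (g ` frontier \<Omega>)"
    and g_cont: "continuous_on (frontier \<Omega>) g"
    and ctrl: "admissible_controls F C"
    and mesh: "\<forall>m. simplicial_partition (T m)"
    and shape: "shape_regular T"
    and mesh_in: "\<forall>m. interior (mesh_domain (T m)) \<subseteq> \<Omega>"
    and bnodes_bd: "\<forall>m. bnodes (T m) \<subseteq> frontier \<Omega>"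
    and h_to_0: "(\<lambda>m. mesh_size (T m)) \<longlonglongrightarrow> 0"
    and k_pos: "\<forall>m. \<forall>x\<in>\<Omega>. k m x > 0"
    and k_stencil: "\<forall>m. \<forall>x\<in>interior (mesh_domain (T m)). \<forall>(sig, lam)\<in>F. \<forall>j.
                      x + k m x *\<^sub>R column j sig \<in> mesh_domain (T m) \<and>
                      x - k m x *\<^sub>R column j sig \<in> mesh_domain (T m)"
    and K1: "\<forall>i>0. \<forall>\<epsilon>>0. \<forall>\<^sub>F m in sequentially.
                \<forall>x\<in>inner_layer \<Omega> i.
                   x \<in> interior (mesh_domain (T m)) \<and> mesh_fun (T m) x / k m x \<le> \<epsilon>"
    and K2: "\<forall>i>0. \<exists>h'>0. \<forall>m. mesh_size (T m) < h' \<longrightarrow>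
                (\<exists>c. \<forall>x\<in>inner_layer \<Omega> i. k m x = c)"
    and K3: "\<forall>\<epsilon>>0. \<forall>\<^sub>F m in sequentially. \<forall>x\<in>\<Omega>. k m x \<le> \<epsilon>"
    and sol: "\<forall>m. discrete_solution F f g (T m) (k m) (u m)"
  shows "\<forall>x\<in>frontier \<Omega>.
           Limsup (sequentially \<times>\<^sub>F (inf (nhds x) (principal (closure \<Omega>))))
                  (\<lambda>(m, y). ereal (mesh_ext (T m) (u m) y)) = ereal (g x) \<and>
           Liminf (sequentially \<times>\<^sub>F (inf (nhds x) (principal (closure \<Omega>))))
                  (\<lambda>(m, y). ereal (mesh_ext (T m) (u m) y)) = ereal (g x)"
proof
  fix x0 assume x0: "x0 \<in> frontier \<Omega>"
  let ?F = "sequentially \<times>\<^sub>F inf (nhds x0) (principal (closure \<Omega>))"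
  have problems: "\<forall>m. discrete_problem F C f g \<Omega> (T m) (k m) (u m)"
    using ctrl mesh sol k_pos k_stencil mesh_in bnodes_bd by (simp add: discrete_problem_def)
  have estimate: "\<forall>\<epsilon>>0. \<exists>L\<ge>0. \<forall>m. \<forall>p\<in>mesh_domain (T m). \<bar>u m p - g x0\<bar> \<le> \<epsilon> + L * dist p x0"
    using discrete_solutions_boundary_estimate[OF dom x0 f_nonneg f_bdd g_bdd g_cont ctrl problems]
    by metis
  have "\<forall>i>0. \<forall>\<^sub>F m in sequentially. inner_layer \<Omega> i \<subseteq> mesh_domain (T m)"
  proof (intro allI impI)
    fix i :: nat assume "0 < i"
    then have "\<forall>\<^sub>F m in sequentially. \<forall>x\<in>inner_layer \<Omega> i.
        x \<in> interior (mesh_domain (T m)) \<and> mesh_fun (T m) x / k m x \<le> 1"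
      using K1 zero_less_one by blast
    then show "\<forall>\<^sub>F m in sequentially. inner_layer \<Omega> i \<subseteq> mesh_domain (T m)"
      by eventually_elim (use interior_subset in blast)
  qed
  then have approach: "\<forall>r>0. \<exists>z. dist z x0 < r \<and> (\<forall>\<^sub>F m in sequentially. z \<in> mesh_domain (T m))"
    using mesh_domains_approach_frontier[OF _ x0] dom by (simp add: strictly_convex_domain_def)
  have "((\<lambda>(m, y). u m (closest_point (mesh_domain (T m)) y)) \<longlongrightarrow> g x0) (sequentially \<times>\<^sub>F nhds x0)"
    using compact_mesh_domain mesh estimate approach
    by (intro tendsto_closest_point_comp) (auto intro: compact_imp_closed)
  then have "((\<lambda>(m, y). ereal (mesh_ext (T m) (u m) y)) \<longlongrightarrow> ereal (g x0)) ?F"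
    unfolding mesh_ext_def case_prod_beta
    by (intro tendsto_ereal tendsto_mono[OF prod_filter_mono[OF order_refl inf_le1]])
  moreover have "\<not> trivial_limit ?F"
    using nhds_inf_principal_ne_bot[of x0 "closure \<Omega>"] x0
    by (simp add: prod_filter_eq_bot frontier_def)
  ultimately show "Limsup ?F (\<lambda>(m, y). ereal (mesh_ext (T m) (u m) y)) = ereal (g x0) \<and>
      Liminf ?F (\<lambda>(m, y). ereal (mesh_ext (T m) (u m) y)) = ereal (g x0)"
    using lim_imp_Limsup lim_imp_Liminf by blast
qed

end
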